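(* Let $S$ be a set of primes, and for $z>e$ let $S_z=\{p\in S: p\le z\}$. Let $\beta$ and $C$ be real constants and suppose $z>e$ satisfies $\sum_{p\in S_z}1/p\leq \beta\log\log z + C$. Let $N_z$ be the set of all positive integers all of whose prime factors lie in $S_z$. Let $\eta\ge 1$. Then \[ \sum_{\substack{n\in N_z\\ \omega(n)\ge \eta\beta\log\log z}}\frac{1}{n} \ll_{C,\eta} (\log z)^{\beta(\eta-\eta\log\eta)}, \] where the implied constant depends only on $C$ and $\eta$.
   Context: $\omega(n)$ is the number of distinct prime divisors of $n$. *)

theory Defs
  imports "HOL-Analysis.Analysis" "HOL-Computational_Algebra.Primes"
begin

definition omega :: "nat \<Rightarrow> nat" where
  "omega n = card (prime_factors n)"

definition S_le :: "nat set \<Rightarrow> real \<Rightarrow> nat set" where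
  "S_le S z = {p \<in> S. real p \<le> z}"

definition N_le :: "nat set \<Rightarrow> real \<Rightarrow> nat set" where
  "N_le S z = {n. n > 0 \<and> prime_factors n \<subseteq> S_le S z}"

end

(* Rankin's trick: for t >= 1 every n with omega n >= x satisfies 1 <= t powr (omega n - x),
   so the sum of 1/n over these n in N_z is at most t powr (-x) times the sum of
   t ^ omega n / n over all of N_z.  That weight is multiplicative, so the full sum is at most
   the Euler product of 1 + t / (p - 1) over p in S_z, which is at most
   exp (t (sum 1/p + 1)) <= exp (t (beta log log z + C + 1)).  Taking t = eta leaves
   exp (eta (C + 1)) (log z) powr (beta (eta - eta log eta)). *)

theory Submission
  imports Defs "HOL-Number_Theory.Totient"
begin

lemma omega_prime_power:
  assumes "prime p"
  shows "omega (p ^ k) = (if k = 0 then 0 else 1)"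
  using assms by (simp add: omega_def prime_factors_power prime_prime_factors)

lemma omega_mult_coprime:
  assumes "a > 0" "b > 0" "coprime a b"
  shows "omega (a * b) = omega a + omega b"
proof -
  have "prime_factors a \<inter> prime_factors b = {}"
    using assms(3) by (auto simp: in_prime_factors_iff dest: coprime_common_divisor)
  then show ?thesis
    using assms by (simp add: omega_def prime_factors_product card_Un_disjoint)
qed

lemma sum_power_omega_prime_powers_le:
  fixes t :: real
  assumes "prime p" "t \<ge> 0"
  shows "(\<Sum>k\<le>K. t ^ omega (p ^ k) / real (p ^ k)) \<le> 1 + t / (real p - 1)"
proof -
  define x where "x = 1 / real p"
  have p: "real p \<ge> 2" using prime_ge_2_nat[OF assms(1)] by simp
  have x: "0 \<le> x" "x < 1" using p by (auto simp: x_def)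
  have "(\<Sum>k\<le>K. t ^ omega (p ^ k) / real (p ^ k)) = 1 + t * (x * (\<Sum>k<K. x ^ k))"
    by (simp add: sum.atMost_shift omega_prime_power[OF assms(1)] x_def power_divide
                  sum_distrib_left mult_ac)
  also have "x * (\<Sum>k<K. x ^ k) = x * (1 - x ^ K) / (1 - x)"
    using x by (simp add: sum_gp_strict)
  also have "\<dots> \<le> x / (1 - x)"
    using x by (intro divide_right_mono) (auto simp: mult_left_le)
  also have "x / (1 - x) = 1 / (real p - 1)"
    using p by (simp add: x_def field_simps)
  finally show ?thesis
    using assms(2) by (simp add: mult_left_mono)
qed

lemma sum_inverse_pred_le:
  fixes P :: "nat set"
  assumes "finite P" "\<forall>n\<in>P. n \<ge> 2"
  shows "(\<Sum>n\<in>P. 1 / (real n - 1)) \<le> (\<Sum>n\<in>P. 1 / real n) + 1"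
proof -
  define M where "M = Max (insert 2 P)"
  have M: "M \<ge> 2" "P \<subseteq> {2..M}"
    using assms by (auto simp: M_def)
  have "(\<Sum>n\<in>P. 1 / (real n - 1) - 1 / real n) \<le> (\<Sum>n\<in>{2..M}. 1 / (real n - 1) - 1 / real n)"
    using M by (intro sum_mono2) (auto simp: field_simps)
  also have "\<dots> = (\<Sum>n\<in>{Suc 1..M}. (- 1 / real n) - (- 1 / real (n - 1)))"
    by (intro sum.cong) (auto simp: of_nat_diff)
  also have "\<dots> = 1 - 1 / real M"
    using M by (subst sum_telescope'') auto
  also have "\<dots> \<le> 1"
    by simp
  finally show ?thesis
    by (simp add: sum_subtractf)
qed

lemma prod_one_plus_le_exp_sum:
  fixes a :: "'a \<Rightarrow> real"
  assumes "\<forall>x\<in>A. a x \<ge> 0"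
  shows "(\<Prod>x\<in>A. 1 + a x) \<le> exp (\<Sum>x\<in>A. a x)"
proof (cases "finite A")
  case True
  have "(\<Prod>x\<in>A. 1 + a x) \<le> (\<Prod>x\<in>A. exp (a x))"
    using assms by (intro prod_mono) (auto simp: add.commute)
  then show ?thesis using True by (simp add: exp_sum)
qed simp

lemma Euler_product_le_exp:
  fixes t :: real
  assumes t: "t \<ge> 0" and P: "finite P" "\<forall>p\<in>P. prime p"
  shows "(\<Prod>p\<in>P. 1 + t / (real p - 1)) \<le> exp (t * ((\<Sum>p\<in>P. 1 / real p) + 1))"
proof -
  have "(\<Prod>p\<in>P. 1 + t / (real p - 1)) \<le> exp (\<Sum>p\<in>P. t / (real p - 1))"
    using t P(2) by (intro prod_one_plus_le_exp_sum) (auto dest!: prime_ge_2_nat)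
  also have "(\<Sum>p\<in>P. t / (real p - 1)) = t * (\<Sum>p\<in>P. 1 / (real p - 1))"
    by (simp add: sum_distrib_left)
  also have "\<dots> \<le> t * ((\<Sum>p\<in>P. 1 / real p) + 1)"
    using t P sum_inverse_pred_le[of P] by (intro mult_left_mono) (auto simp: prime_ge_2_nat)
  finally show ?thesis
    by simp
qed

lemma prime_power_part_split:
  fixes n :: nat
  assumes p: "prime p" and n: "n > 0"
  defines "m \<equiv> n div p ^ multiplicity p n"
  shows "n = p ^ multiplicity p n * m" "m > 0" "\<not> p dvd m"
    and "prime_factors m \<subseteq> prime_factors n - {p}"
proof -
  show split: "n = p ^ multiplicity p n * m"
    by (simp add: m_def multiplicity_dvd)
  then show "m > 0"
    using n by (metis gr0I mult_0_right)
  show "\<not> p dvd m"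
    unfolding m_def using n p by (intro multiplicity_decompose) auto
  moreover have "prime_factors m \<subseteq> prime_factors n"
    using n split by (metis dvd_prime_factors dvd_triv_right not_gr0)
  ultimately show "prime_factors m \<subseteq> prime_factors n - {p}"
    by (auto simp: in_prime_factors_iff)
qed

lemma sum_power_omega_le_Euler_product:
  fixes t :: real
  assumes t: "t \<ge> 0" and "finite P" "\<forall>p\<in>P. prime p"
    and "finite F" "\<forall>n\<in>F. n > 0 \<and> prime_factors n \<subseteq> P"
  shows "(\<Sum>n\<in>F. t ^ omega n / real n) \<le> (\<Prod>p\<in>P. 1 + t / (real p - 1))"
  using assms(2-)
proof (induction P arbitrary: F rule: finite_induct)
  case empty
  then have "F \<subseteq> {1}"
    by (auto simp: prime_factorization_empty_iff)
  then have "(\<Sum>n\<in>F. t ^ omega n / real n) \<le> (\<Sum>n\<in>{1}. t ^ omega n / real n)"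
    using t by (intro sum_mono2) auto
  then show ?case
    by (simp add: omega_def)
next
  case (insert p P)
  have p: "prime p"
    using insert.prems by simp
  define w where "w n = t ^ omega n / real n" for n
  define k where "k n = multiplicity p n" for n
  define m where "m n = n div p ^ k n" for n
  have n_eq: "n = p ^ k n * m n" for n
    by (simp add: k_def m_def multiplicity_dvd)
  have m: "m n > 0" "\<not> p dvd m n" "prime_factors (m n) \<subseteq> P" if "n \<in> F" for n
    using prime_power_part_split[OF p, of n] insert.prems that by (auto simp: k_def m_def)
  have w_eq: "w n = w (p ^ k n) * w (m n)" if "n \<in> F" for n
  proof -
    have "coprime (p ^ k n) (m n)"
      using m(2)[OF that] p by (simp add: prime_imp_coprime)
    then have "omega n = omega (p ^ k n) + omega (m n)"
      using m(1)[OF that] p n_eq[of n] by (metis omega_mult_coprime prime_gt_0_nat zero_less_power)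
    then show ?thesis
      unfolding w_def using n_eq[of n] by (metis of_nat_mult power_add times_divide_times_eq)
  qed
  have inj: "inj_on (\<lambda>n. (k n, m n)) F"
    by (rule inj_onI) (metis n_eq prod.inject)
  define M where "M = m ` F"
  define K where "K = Max (k ` F)"
  have "(\<Sum>n\<in>F. w n) = (\<Sum>(i, b)\<in>(\<lambda>n. (k n, m n)) ` F. w (p ^ i) * w b)"
    by (simp add: sum.reindex[OF inj] w_eq)
  also have "\<dots> \<le> (\<Sum>(i, b)\<in>{..K} \<times> M. w (p ^ i) * w b)"
  proof (rule sum_mono2)
    show "(\<lambda>n. (k n, m n)) ` F \<subseteq> {..K} \<times> M"
      using insert.prems by (auto simp: K_def M_def)
  qed (use insert.prems t in \<open>auto simp: M_def w_def\<close>)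
  also have "\<dots> = (\<Sum>i\<le>K. w (p ^ i)) * (\<Sum>b\<in>M. w b)"
    by (simp add: sum_product sum.cartesian_product)
  also have "\<dots> \<le> (1 + t / (real p - 1)) * (\<Prod>p\<in>P. 1 + t / (real p - 1))"
  proof (rule mult_mono)
    show "(\<Sum>i\<le>K. w (p ^ i)) \<le> 1 + t / (real p - 1)"
      unfolding w_def by (rule sum_power_omega_prime_powers_le[OF p t])
    show "(\<Sum>b\<in>M. w b) \<le> (\<Prod>p\<in>P. 1 + t / (real p - 1))"
      unfolding w_def using insert m by (intro insert.IH) (auto simp: M_def)
  qed (use t prime_ge_2_nat[OF p] in \<open>auto simp: w_def intro: sum_nonneg\<close>)
  finally show ?case
    using insert.hyps by (simp add: w_def)
qed

lemma Rankin_bound: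
  fixes t x :: real
  assumes t: "t \<ge> 1" and P: "finite P" "\<forall>p\<in>P. prime p"
    and A: "A \<subseteq> {n. n > 0 \<and> prime_factors n \<subseteq> P \<and> real (omega n) \<ge> x}"
  shows "(\<lambda>n. 1 / real n) summable_on A"
    and "(\<Sum>\<^sub>\<infinity>n\<in>A. 1 / real n) \<le> t powr (-x) * (\<Prod>p\<in>P. 1 + t / (real p - 1))"
proof -
  have finite_sums: "(\<Sum>n\<in>F. 1 / real n) \<le> t powr (-x) * (\<Prod>p\<in>P. 1 + t / (real p - 1))"
    if F: "finite F" "F \<subseteq> A" for F
  proof -
    have "(\<Sum>n\<in>F. 1 / real n) \<le> (\<Sum>n\<in>F. t powr (-x) * (t ^ omega n / real n))"
    proof (rule sum_mono)
      fix n assume "n \<in> F"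
      then have "1 \<le> t powr (real (omega n) - x)"
        using F A t by (intro ge_one_powr_ge_zero) auto
      also have "\<dots> = t powr (-x) * t ^ omega n"
        using t by (simp add: powr_diff powr_minus powr_realpow divide_inverse)
      finally show "1 / real n \<le> t powr (-x) * (t ^ omega n / real n)"
        by (simp add: divide_right_mono)
    qed
    also have "\<dots> = t powr (-x) * (\<Sum>n\<in>F. t ^ omega n / real n)"
      by (simp add: sum_distrib_left)
    also have "\<dots> \<le> t powr (-x) * (\<Prod>p\<in>P. 1 + t / (real p - 1))"
      using t P F A by (intro mult_left_mono sum_power_omega_le_Euler_product) auto
    finally show ?thesis .
  qed
  show summable: "(\<lambda>n. 1 / real n) summable_on A"
    by (rule nonneg_bdd_above_summable_on) (auto intro!: bdd_aboveI2 finite_sums)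
  show "(\<Sum>\<^sub>\<infinity>n\<in>A. 1 / real n) \<le> t powr (-x) * (\<Prod>p\<in>P. 1 + t / (real p - 1))"
    by (rule infsum_le_finite_sums[OF summable finite_sums])
qed

lemma finite_S_le: "finite (S_le S z)"
  by (rule finite_subset[of _ "{..nat \<lfloor>z\<rfloor>}"]) (auto simp: S_le_def le_nat_floor)

theorem lemma5p2:
  fixes C \<eta> :: real
  assumes "\<eta> \<ge> 1"
  shows "\<exists>K::real. \<forall>(S::nat set) (\<beta>::real) (z::real).
           (\<forall>p\<in>S. prime p) \<longrightarrow> z > exp 1 \<longrightarrow>
           (\<Sum>p\<in>S_le S z. 1 / real p) \<le> \<beta> * ln (ln z) + C \<longrightarrow>
           ((\<lambda>n. 1 / real n) summable_on
              {n \<in> N_le S z. real (omega n) \<ge> \<eta> * \<beta> * ln (ln z)}) \<and>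
           (\<Sum>\<^sub>\<infinity>n\<in>{n \<in> N_le S z. real (omega n) \<ge> \<eta> * \<beta> * ln (ln z)}. 1 / real n)
             \<le> K * (ln z) powr (\<beta> * (\<eta> - \<eta> * ln \<eta>))"
proof (intro exI allI impI)
  fix S :: "nat set" and \<beta> z :: real
  assume S: "\<forall>p\<in>S. prime p" and z: "z > exp 1"
    and sum_S: "(\<Sum>p\<in>S_le S z. 1 / real p) \<le> \<beta> * ln (ln z) + C"
  have ln_z: "ln z > 1"
    using z by (metis exp_gt_zero less_trans ln_exp ln_less_cancel_iff)
  define P where "P = S_le S z"
  let ?x = "\<eta> * \<beta> * ln (ln z)"
  let ?A = "{n \<in> N_le S z. real (omega n) \<ge> ?x}"
  have P: "finite P" "\<forall>p\<in>P. prime p"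
    using S finite_S_le by (auto simp: P_def S_le_def)
  have A: "?A \<subseteq> {n. n > 0 \<and> prime_factors n \<subseteq> P \<and> real (omega n) \<ge> ?x}"
    by (auto simp: N_le_def P_def)
  have "(\<Prod>p\<in>P. 1 + \<eta> / (real p - 1)) \<le> exp (\<eta> * ((\<Sum>p\<in>P. 1 / real p) + 1))"
    using assms P by (intro Euler_product_le_exp) auto
  also have "\<dots> \<le> exp (\<eta> * (\<beta> * ln (ln z) + C + 1))"
    using sum_S assms by (simp add: P_def)
  finally have Euler_product: "(\<Prod>p\<in>P. 1 + \<eta> / (real p - 1)) \<le> exp (\<eta> * (\<beta> * ln (ln z) + C + 1))" .
  have "(\<Sum>\<^sub>\<infinity>n\<in>?A. 1 / real n) \<le> \<eta> powr (-?x) * (\<Prod>p\<in>P. 1 + \<eta> / (real p - 1))"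
    by (rule Rankin_bound(2)[OF assms P A])
  also have "\<dots> \<le> \<eta> powr (-?x) * exp (\<eta> * (\<beta> * ln (ln z) + C + 1))"
    by (rule mult_left_mono[OF Euler_product]) simp
  also have "\<dots> = exp (\<eta> * (C + 1)) * (ln z) powr (\<beta> * (\<eta> - \<eta> * ln \<eta>))"
    using assms ln_z by (simp add: powr_def exp_add[symmetric] algebra_simps)
  finally show "(\<lambda>n. 1 / real n) summable_on ?A \<and>
      (\<Sum>\<^sub>\<infinity>n\<in>?A. 1 / real n) \<le> exp (\<eta> * (C + 1)) * (ln z) powr (\<beta> * (\<eta> - \<eta> * ln \<eta>))"
    using Rankin_bound(1)[OF assms P A] by simp
qed

end
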